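(* Let $\mu$ be a Borel probability measure on $\mathbb{R}$ with $\mathbb{E}_\mu[X^2]<\infty$. For $z\in\mathbb{C}$ define $$d(z;\mu)=\int_{-\infty}^{\infty}\phi(y-z)\Big(-\tfrac12\log(2\pi)-\tfrac{(y-z)^2}{2}-\log p_Y(y;\mu)\Big)\,dy,$$ where $\phi(w)=\frac{1}{\sqrt{2\pi}}e^{-w^2/2}$ is extended to complex $w$. Then the integral converges for every $z\in\mathbb{C}$ and $d(\cdot;\mu)$ is holomorphic (entire) on $\mathbb{C}$. Consequently $x\mapsto d(x;\mu)$ is continuous on $\mathbb{R}$.
   Context: $p_Y(y;\mu)=\mathbb{E}_\mu[\phi(y-X)]$ for real $y$, with $\phi(t)=\frac{1}{\sqrt{2\pi}}e^{-t^2/2}$. For real $z=x$, $d(x;\mu)$ equals the relative entropy between the $N(x,1)$ density and $p_Y(\cdot;\mu)$. *)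

theory Defs
  imports "HOL-Probability.Probability"
begin

definition phi_c :: "complex \<Rightarrow> complex" where
  "phi_c w = exp (- (w ^ 2) / 2) / complex_of_real (sqrt (2 * pi))"

definition phi :: "real \<Rightarrow> real" where
  "phi t = exp (- (t ^ 2) / 2) / sqrt (2 * pi)"

definition pY :: "real measure \<Rightarrow> real \<Rightarrow> real" where
  "pY \<mu> y = (\<integral>x. phi (y - x) \<partial>\<mu>)"

definition d_integrand :: "real measure \<Rightarrow> complex \<Rightarrow> real \<Rightarrow> complex" where
  "d_integrand \<mu> z y =
     phi_c (complex_of_real y - z) *
       (- complex_of_real (ln (2 * pi) / 2) - (complex_of_real y - z) ^ 2 / 2
        - complex_of_real (ln (pY \<mu> y)))"

definition d :: "real measure \<Rightarrow> complex \<Rightarrow> complex" where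
  "d \<mu> z = (\<integral>y. d_integrand \<mu> z y \<partial>lborel)"

end

theory Submission
  imports Defs
begin

(*
  Write w = y - z.  The integrand of d(z; mu) is phi_c(w) * (a(y) - w^2/2), where
  a(y) = -log(2 pi)/2 - log p_Y(y; mu) depends on y only.  The proof rests on two estimates:
  (1) |phi_c(y - z)| <= e^(R^2/2) sqrt 2 * N(0,2)-density(y) whenever |z| <= R, so that the
      integrand and its first two z-derivatives phi_c(w) P_i(a, w) (P_i explicit polynomials)
      are dominated on the disc |z| <= R by a Gaussian times a quartic, as soon as
      |a(y)| <= A + y^2;
  (2) e^(-y^2) E[e^(-X^2)] / sqrt(2 pi) <= p_Y(y) <= 1, so a(y) does grow at most quadratically.
*)

section \<open>Differentiation under the integral sign\<close>

lemma has_field_derivative_quadratic_remainder: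
  fixes f :: "'a :: real_normed_field \<Rightarrow> 'a"
  assumes r: "0 < r"
    and remainder: "\<And>z. z \<in> ball z0 r \<Longrightarrow> norm (f z - f z0 - D * (z - z0)) \<le> K * (norm (z - z0))\<^sup>2"
  shows "(f has_field_derivative D) (at z0)"
proof -
  have "((\<lambda>z. (f z - f z0) / (z - z0) - D) \<longlongrightarrow> 0) (at z0)"
  proof (rule Lim_null_comparison)
    show "\<forall>\<^sub>F z in at z0. norm ((f z - f z0) / (z - z0) - D) \<le> K * norm (z - z0)"
      unfolding eventually_at
    proof (intro exI[of _ r] conjI ballI impI)
      fix z assume "z \<noteq> z0 \<and> dist z z0 < r"
      then have z: "z \<in> ball z0 r" and nz: "z - z0 \<noteq> 0" by (auto simp: dist_commute)
      have "norm ((f z - f z0) / (z - z0) - D) = norm (f z - f z0 - D * (z - z0)) / norm (z - z0)"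
        using nz by (simp add: field_simps norm_divide)
      also have "\<dots> \<le> K * (norm (z - z0))\<^sup>2 / norm (z - z0)"
        using remainder[OF z] by (intro divide_right_mono) auto
      also have "\<dots> = K * norm (z - z0)" using nz by (simp add: power2_eq_square)
      finally show "norm ((f z - f z0) / (z - z0) - D) \<le> K * norm (z - z0)" .
    qed (use r in simp)
    show "((\<lambda>z. K * norm (z - z0)) \<longlongrightarrow> 0) (at z0)"
      by (intro tendsto_eq_intros) (auto intro: tendsto_ident_at)
  qed
  then have "((\<lambda>z. ((f z - f z0) / (z - z0) - D) + D) \<longlongrightarrow> 0 + D) (at z0)"
    by (intro tendsto_add) auto
  then show ?thesis unfolding has_field_derivative_iff by simp
qed

lemma has_field_derivative_integral:
  fixes F :: "nat \<Rightarrow> 'a \<Rightarrow> complex \<Rightarrow> complex" and g :: "'a \<Rightarrow> real"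
  assumes r: "0 < r"
    and deriv: "\<And>i y z. i \<le> 1 \<Longrightarrow> (F i y has_field_derivative F (Suc i) y z) (at z)"
    and int0: "\<And>z. z \<in> ball z0 r \<Longrightarrow> integrable M (\<lambda>y. F 0 y z)"
    and int1: "integrable M (\<lambda>y. F 1 y z0)"
    and int_g: "integrable M g"
    and dominated: "\<And>y z. z \<in> ball z0 r \<Longrightarrow> norm (F 2 y z) \<le> g y"
  shows "((\<lambda>z. \<integral>y. F 0 y z \<partial>M) has_field_derivative (\<integral>y. F 1 y z0 \<partial>M)) (at z0)"
proof (rule has_field_derivative_quadratic_remainder[OF r])
  fix z assume z: "z \<in> ball z0 r"
  define R where "R y = F 0 y z - F 0 y z0 - F 1 y z0 * (z - z0)" for y
  have taylor: "norm (R y) \<le> g y * (cmod (z - z0))\<^sup>2" for y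
  proof -
    have "cmod (F 0 y z - (\<Sum>i\<le>1. F i y z0 * (z - z0) ^ i / fact i))
          \<le> g y * cmod (z - z0) ^ Suc 1 / fact 1"
    proof (rule complex_Taylor[where S="ball z0 r"])
      show "(F i y has_field_derivative F (Suc i) y x) (at x within ball z0 r)" if "i \<le> 1" for i x
        using deriv[OF that] by (rule has_field_derivative_at_within)
      show "cmod (F (Suc 1) y x) \<le> g y" if "x \<in> ball z0 r" for x
        using dominated[OF that] by (simp add: numeral_2_eq_2)
    qed (use z r in auto)
    then show ?thesis by (simp add: R_def power2_eq_square algebra_simps)
  qed
  have int_R: "integrable M R"
    unfolding R_def using int0[OF z] int0[of z0] r int1 by auto
  have "(\<integral>y. F 0 y z \<partial>M) - (\<integral>y. F 0 y z0 \<partial>M) - (\<integral>y. F 1 y z0 \<partial>M) * (z - z0) = (\<integral>y. R y \<partial>M)"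
    unfolding R_def using int0[OF z] int0[of z0] r int1 by simp
  also have "norm \<dots> \<le> (\<integral>y. norm (R y) \<partial>M)"
    by (rule integral_norm_bound)
  also have "\<dots> \<le> (\<integral>y. g y * (cmod (z - z0))\<^sup>2 \<partial>M)"
    using int_R int_g taylor by (intro integral_mono) auto
  also have "\<dots> = (\<integral>y. g y \<partial>M) * (cmod (z - z0))\<^sup>2" by simp
  finally show "norm ((\<integral>y. F 0 y z \<partial>M) - (\<integral>y. F 0 y z0 \<partial>M) - (\<integral>y. F 1 y z0 \<partial>M) * (z - z0))
      \<le> (\<integral>y. g y \<partial>M) * (cmod (z - z0))\<^sup>2" .
qed

section \<open>The complex Gaussian kernel and its z-derivatives\<close>

text \<open>With w = y - z, the integrand of d and its first two z-derivatives have the form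
  phi_c(w) * P_i(a, w) for the following polynomials, where a is the part of the integrand
  that depends on y alone.\<close>
fun gauss_poly :: "nat \<Rightarrow> complex \<Rightarrow> complex \<Rightarrow> complex" where
  "gauss_poly 0 a w = a - w\<^sup>2 / 2"
| "gauss_poly (Suc 0) a w = w * a + w - w ^ 3 / 2"
| "gauss_poly (Suc (Suc _)) a w = w * (w * a + w - w ^ 3 / 2) - a - 1 + 3 * w\<^sup>2 / 2"

lemma gauss_poly_index_cases:
  obtains (zero) "i = 0" | (one) "i = 1" | (two) k where "i = Suc (Suc k)"
  by (metis One_nat_def not0_implies_Suc)

definition gauss_term :: "complex \<Rightarrow> real \<Rightarrow> nat \<Rightarrow> complex \<Rightarrow> complex" where
  "gauss_term a y i z = phi_c (of_real y - z) * gauss_poly i a (of_real y - z)"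

lemma phi_c_shift_deriv:
  "((\<lambda>z. phi_c (of_real y - z)) has_field_derivative phi_c (of_real y - z) * (of_real y - z)) (at z)"
  unfolding phi_c_def
  by (auto intro!: derivative_eq_intros simp: field_simps power2_eq_square)

text \<open>d/dz [phi_c(w) P(w)] = phi_c(w) (w P(w) - P'(w)); this produces P_1 from P_0 and P_2 from P_1.\<close>
lemma gauss_term_deriv:
  assumes "i \<le> 1"
  shows "(gauss_term a y i has_field_derivative gauss_term a y (Suc i) z) (at z)"
proof -
  have product: "((\<lambda>z. phi_c (of_real y - z) * p z) has_field_derivative
          phi_c (of_real y - z) * ((of_real y - z) * p z + p')) (at z)"
    if "(p has_field_derivative p') (at z)" for p p'
    using DERIV_mult[OF phi_c_shift_deriv that] by (simp add: algebra_simps)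
  consider "i = 0" | "i = 1" using assms by linarith
  then show ?thesis
  proof cases
    case 1
    have "((\<lambda>z. gauss_poly 0 a (of_real y - z)) has_field_derivative (of_real y - z)) (at z)"
      by (auto intro!: derivative_eq_intros simp: field_simps power2_eq_square)
    from product[OF this] show ?thesis using 1 unfolding gauss_term_def
      by (simp add: algebra_simps power2_eq_square power3_eq_cube)
  next
    case 2
    have "((\<lambda>z. gauss_poly 1 a (of_real y - z)) has_field_derivative
          (- a - 1 + 3 * (of_real y - z)\<^sup>2 / 2)) (at z)"
      by (auto intro!: derivative_eq_intros simp: field_simps power2_eq_square)
    from product[OF this] show ?thesis using 2 unfolding gauss_term_def
      by (simp add: algebra_simps power2_eq_square power3_eq_cube numeral_2_eq_2)
  qed
qed

lemma gauss_term_measurable [measurable]: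
  assumes [measurable]: "a \<in> borel_measurable borel"
  shows "(\<lambda>y. gauss_term (a y) y i z) \<in> borel_measurable borel"
proof -
  have "(\<lambda>y. gauss_poly i (a y) (of_real y - z)) \<in> borel_measurable borel"
    by (cases i rule: gauss_poly_index_cases) simp_all
  then show ?thesis unfolding gauss_term_def phi_c_def by measurable
qed

lemma phi_c_bound:
  assumes z: "cmod z \<le> R"
  shows "cmod (phi_c (of_real y - z)) \<le> exp (R\<^sup>2 / 2) * sqrt 2 * normal_density 0 (sqrt 2) y"
proof -
  define u where "u = Re z"
  define v where "v = Im z"
  have uv: "u\<^sup>2 + v\<^sup>2 \<le> R\<^sup>2"
    using power_mono[OF z norm_ge_zero, of 2] unfolding u_def v_def by (simp add: cmod_power2)
  have re: "Re (- ((of_real y - z)\<^sup>2) / 2) = - ((y - u)\<^sup>2 - v\<^sup>2) / 2"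
    unfolding u_def v_def by (simp add: power2_eq_square field_simps)
  (* complete the square in y *)
  have "- ((y - u)\<^sup>2 - v\<^sup>2) / 2 = - y\<^sup>2 / 4 + (u\<^sup>2 + v\<^sup>2) / 2 - (y - 2 * u)\<^sup>2 / 4"
    by (simp add: power2_eq_square field_simps)
  also have "\<dots> \<le> - y\<^sup>2 / 4 + (u\<^sup>2 + v\<^sup>2) / 2" by simp
  also have "\<dots> \<le> - y\<^sup>2 / 4 + R\<^sup>2 / 2" using uv by simp
  finally have exponent: "exp (Re (- ((of_real y - z)\<^sup>2) / 2)) \<le> exp (R\<^sup>2 / 2) * exp (- y\<^sup>2 / 4)"
    unfolding re by (simp add: exp_add[symmetric])
  have density: "normal_density 0 (sqrt 2) y = exp (- y\<^sup>2 / 4) / (sqrt 2 * sqrt (2 * pi))"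
    unfolding normal_density_def by (simp add: mult.commute real_sqrt_mult[symmetric])
  have "cmod (phi_c (of_real y - z)) = exp (Re (- ((of_real y - z)\<^sup>2) / 2)) / sqrt (2 * pi)"
    unfolding phi_c_def by (simp add: norm_divide)
  also have "\<dots> \<le> exp (R\<^sup>2 / 2) * exp (- y\<^sup>2 / 4) / sqrt (2 * pi)"
    using exponent by (simp add: divide_right_mono)
  also have "\<dots> = exp (R\<^sup>2 / 2) * sqrt 2 * normal_density 0 (sqrt 2) y"
    unfolding density by simp
  finally show ?thesis .
qed

lemma gauss_poly_bound:
  fixes w a :: complex
  assumes w: "norm w \<le> t" and a: "norm a \<le> t\<^sup>2" and t: "1 \<le> t"
  shows "norm (gauss_poly i a w) \<le> 6 * t ^ 4"
proof -
  have t0: "0 \<le> t" using t by simp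
  have w2: "norm (w\<^sup>2) \<le> t\<^sup>2" and w3: "norm (w ^ 3) \<le> t ^ 3"
    using w by (simp_all add: norm_power power_mono)
  have powers: "t\<^sup>2 \<le> t ^ 4" "t \<le> t ^ 4" "t ^ 3 \<le> t ^ 4" "1 \<le> t ^ 4"
    using power_increasing[of 2 4 t] power_increasing[of 1 4 t] power_increasing[of 3 4 t]
      one_le_power[of t 4] t by auto
  have "norm w * norm a \<le> t * t\<^sup>2" by (rule mult_mono) (use w a t0 in auto)
  then have wa: "norm (w * a) \<le> t ^ 3"
    by (simp add: norm_mult power3_eq_cube power2_eq_square)
  have P1: "norm (w * a + w - w ^ 3 / 2) \<le> t ^ 3 + t + t ^ 3 / 2"
    using wa w w3 norm_triangle_ineq4[of "w * a + w" "w ^ 3 / 2"] norm_triangle_ineq[of "w * a" w]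
    by (simp add: norm_divide)
  show ?thesis
  proof (cases i rule: gauss_poly_index_cases)
    case zero
    have "norm (a - w\<^sup>2 / 2) \<le> t\<^sup>2 + t\<^sup>2 / 2"
      using a w2 norm_triangle_ineq4[of a "w\<^sup>2 / 2"] by (simp add: norm_divide)
    then show ?thesis using zero powers by simp
  next
    case one
    then show ?thesis using P1 powers by simp
  next
    case two
    have "norm (w * (w * a + w - w ^ 3 / 2)) \<le> t * (t ^ 3 + t + t ^ 3 / 2)"
      using P1 w t0 by (simp add: norm_mult mult_mono)
    moreover have "norm (3 * w\<^sup>2 / 2) \<le> 3 * t\<^sup>2 / 2"
      using w2 by (simp add: norm_mult norm_divide norm_power)
    ultimately have "norm (w * (w * a + w - w ^ 3 / 2) - a - 1 + 3 * w\<^sup>2 / 2)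
        \<le> t * (t ^ 3 + t + t ^ 3 / 2) + t\<^sup>2 + 1 + 3 * t\<^sup>2 / 2"
      using a norm_triangle_ineq4[of "w * (w * a + w - w ^ 3 / 2)" a]
        norm_triangle_ineq4[of "w * (w * a + w - w ^ 3 / 2) - a" 1]
        norm_triangle_ineq[of "w * (w * a + w - w ^ 3 / 2) - a - 1" "3 * w\<^sup>2 / 2"]
      by simp
    also have "\<dots> = 3 / 2 * t ^ 4 + 7 / 2 * t\<^sup>2 + 1"
      by (simp add: algebra_simps power2_eq_square power4_eq_xxxx power3_eq_cube)
    also have "\<dots> \<le> 6 * t ^ 4" using powers by simp
    finally show ?thesis using two by simp
  qed
qed

text \<open>The dominating function on the disc |z| <= R, for coefficients with |a(y)| <= A + y^2:
  a N(0,2) density times a quartic polynomial, hence integrable.\<close>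
definition gauss_dominant :: "real \<Rightarrow> real \<Rightarrow> real \<Rightarrow> real" where
  "gauss_dominant A R y =
     48 * exp (R\<^sup>2 / 2) * sqrt 2 * normal_density 0 (sqrt 2) y * (y ^ 4 + (R + A + 1) ^ 4)"

lemma gauss_dominant_integrable: "integrable lborel (gauss_dominant A R)"
proof -
  define K where "K = 48 * exp (R\<^sup>2 / 2) * sqrt 2"
  have "integrable lborel (\<lambda>y. K * (normal_density 0 (sqrt 2) y * (y - 0) ^ 4)
                              + (K * (R + A + 1) ^ 4) * normal_density 0 (sqrt 2) y)"
    using integrable_normal_moment[where k=4 and \<mu>=0 and \<sigma>="sqrt 2"]
      integrable_normal_density[where \<mu>=0 and \<sigma>="sqrt 2"] by auto
  then show ?thesis unfolding gauss_dominant_def K_def by (simp add: algebra_simps)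
qed

text \<open>|y| + R + A + 1 controls all quantities; its fourth power is at most 8 (y^4 + (R+A+1)^4).\<close>
lemma fourth_power_sum_le: "(\<bar>p\<bar> + q) ^ 4 \<le> 8 * (p ^ 4 + q ^ 4)" for p q :: real
proof -
  have "(\<bar>p\<bar> + q)\<^sup>2 \<le> 2 * (p\<^sup>2 + q\<^sup>2)"
    using sum_squares_ge_zero[of "\<bar>p\<bar> - q" 0] by (simp add: power2_eq_square algebra_simps)
  then have "((\<bar>p\<bar> + q)\<^sup>2)\<^sup>2 \<le> (2 * (p\<^sup>2 + q\<^sup>2))\<^sup>2" by (intro power_mono) auto
  also have "\<dots> \<le> 8 * (p ^ 4 + q ^ 4)"
    using zero_le_power2[of "p\<^sup>2 - q\<^sup>2"] by (simp add: power2_eq_square power4_eq_xxxx algebra_simps)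
  finally show ?thesis by (simp add: power_mult[symmetric])
qed

lemma gauss_term_dominated:
  assumes z: "cmod z \<le> R" and R: "0 \<le> R" and a: "norm a \<le> A + y\<^sup>2" and A: "0 \<le> A"
  shows "norm (gauss_term a y i z) \<le> gauss_dominant A R y"
proof -
  define t where "t = \<bar>y\<bar> + (R + A + 1)"
  have t1: "1 \<le> t" unfolding t_def using R A by simp
  have "norm (of_real y - z) \<le> norm (of_real y :: complex) + norm z" by (rule norm_triangle_ineq4)
  then have w: "norm (of_real y - z) \<le> t" unfolding t_def using z R A by simp
  have "A \<le> (R + A + 1)\<^sup>2" using R A by (simp add: power2_eq_square algebra_simps)
  then have "A + y\<^sup>2 \<le> t\<^sup>2" using R A unfolding t_def by (simp add: power2_eq_square algebra_simps)
  with a have a': "norm a \<le> t\<^sup>2" by linarith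
  have "norm (gauss_term a y i z)
      \<le> (exp (R\<^sup>2 / 2) * sqrt 2 * normal_density 0 (sqrt 2) y) * (6 * t ^ 4)"
    unfolding gauss_term_def norm_mult
    by (intro mult_mono phi_c_bound[OF z] gauss_poly_bound[OF w a' t1]) auto
  also have "\<dots> \<le> (exp (R\<^sup>2 / 2) * sqrt 2 * normal_density 0 (sqrt 2) y) * (6 * (8 * (y ^ 4 + (R + A + 1) ^ 4)))"
    using fourth_power_sum_le[of y "R + A + 1"] unfolding t_def by (intro mult_left_mono) auto
  also have "\<dots> = gauss_dominant A R y"
    unfolding gauss_dominant_def by (simp add: algebra_simps)
  finally show ?thesis .
qed

section \<open>Gaussian integrals with quadratically growing coefficients are entire\<close>

lemma gauss_term_integrable:
  assumes [measurable]: "a \<in> borel_measurable borel"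
    and A: "0 \<le> A" and growth: "\<And>y. norm (a y) \<le> A + y\<^sup>2"
  shows "integrable lborel (\<lambda>y. gauss_term (a y) y i z)"
proof (rule Bochner_Integration.integrable_bound[OF gauss_dominant_integrable[of A "cmod z"]])
  have "norm (gauss_term (a y) y i z) \<le> gauss_dominant A (cmod z) y" for y
    by (rule gauss_term_dominated[OF order.refl norm_ge_zero growth A])
  then show "AE y in lborel. norm (gauss_term (a y) y i z) \<le> norm (gauss_dominant A (cmod z) y)"
    by (auto intro: order_trans[OF _ abs_ge_self])
qed simp

text \<open>Entire-ness: at each z0, apply differentiation under the integral sign on the ball of
  radius 1, where |z| <= |z0| + 1 gives a single integrable dominating function.\<close>
lemma gauss_integral_entire:
  assumes [measurable]: "a \<in> borel_measurable borel"
    and A: "0 \<le> A" and growth: "\<And>y. norm (a y) \<le> A + y\<^sup>2"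
  shows "(\<lambda>z. \<integral>y. gauss_term (a y) y 0 z \<partial>lborel) holomorphic_on UNIV"
proof -
  have "((\<lambda>z. \<integral>y. gauss_term (a y) y 0 z \<partial>lborel) has_field_derivative
          (\<integral>y. gauss_term (a y) y 1 z0 \<partial>lborel)) (at z0)" for z0
  proof (rule has_field_derivative_integral[where r=1 and g="gauss_dominant A (cmod z0 + 1)"])
    fix y z assume "z \<in> ball z0 1"
    then have "cmod z \<le> cmod z0 + 1"
      using norm_triangle_ineq2[of z z0] by (simp add: dist_norm norm_minus_commute)
    then show "norm (gauss_term (a y) y 2 z) \<le> gauss_dominant A (cmod z0 + 1) y"
      by (rule gauss_term_dominated[OF _ _ growth A]) simp
  qed (use gauss_term_deriv gauss_term_integrable[OF _ A growth] gauss_dominant_integrable in auto)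
  then show ?thesis by (auto simp: holomorphic_on_open)
qed

section \<open>The output density grows log-quadratically\<close>

lemma phi_measurable [measurable]: "phi \<in> borel_measurable borel"
  unfolding phi_def by measurable

lemma phi_pos: "0 < phi t"
  unfolding phi_def by simp

lemma phi_le_one: "phi t \<le> 1"
proof -
  have "1 \<le> sqrt (2 * pi)" using pi_gt3 by (simp add: real_le_rsqrt)
  then show ?thesis unfolding phi_def by (simp add: divide_le_eq_1 order_trans[OF _ \<open>1 \<le> _\<close>])
qed

text \<open>Gaussian comparison: phi(y - x) >= phi(0) e^(-y^2) e^(-x^2), since (y - x)^2 <= 2y^2 + 2x^2.\<close>
lemma phi_shift_lower: "exp (- y\<^sup>2) / sqrt (2 * pi) * exp (- x\<^sup>2) \<le> phi (y - x)"
proof -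
  have "- y\<^sup>2 + - x\<^sup>2 \<le> - (y - x)\<^sup>2 / 2"
    using zero_le_power2[of "y + x"] by (simp add: power2_eq_square algebra_simps)
  then have "exp (- y\<^sup>2) * exp (- x\<^sup>2) \<le> exp (- (y - x)\<^sup>2 / 2)"
    by (simp add: exp_add[symmetric])
  then show ?thesis unfolding phi_def by (simp add: divide_right_mono)
qed

context
  fixes \<mu> :: "real measure"
  assumes prob: "prob_space \<mu>" and sets_\<mu>: "sets \<mu> = sets borel"
begin

interpretation prob_space \<mu> by (fact prob)

lemma measurable_\<mu>: "f \<in> borel_measurable borel \<Longrightarrow> f \<in> borel_measurable \<mu>"
  using measurable_cong_sets[OF sets_\<mu> refl] by blast

lemma pY_measurable [measurable]: "pY \<mu> \<in> borel_measurable borel"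
proof -
  have "(\<lambda>(y, x). phi (y - x)) \<in> borel_measurable (borel \<Otimes>\<^sub>M borel)"
    by measurable
  then have "(\<lambda>(y, x). phi (y - x)) \<in> borel_measurable (borel \<Otimes>\<^sub>M \<mu>)"
    using measurable_cong_sets[OF sets_pair_measure_cong[OF refl sets_\<mu>] refl] by blast
  from borel_measurable_lebesgue_integral[OF this] show ?thesis
    unfolding pY_def by simp
qed

lemma integrable_phi_shift: "integrable \<mu> (\<lambda>x. phi (y - x))"
  by (rule integrable_const_bound[where B=1])
     (auto simp: phi_le_one abs_of_pos[OF phi_pos] intro!: measurable_\<mu>)

lemma pY_le_one: "pY \<mu> y \<le> 1"
proof -
  have "pY \<mu> y \<le> (\<integral>x. 1 \<partial>\<mu>)"
    unfolding pY_def by (intro integral_mono integrable_phi_shift) (auto simp: phi_le_one)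
  then show ?thesis by (simp add: prob_space)
qed

lemma pY_lower: "\<exists>c>0. \<forall>y. c * exp (- y\<^sup>2) \<le> pY \<mu> y"
proof -
  define m where "m = (\<integral>x. exp (- x\<^sup>2) \<partial>\<mu>)"
  have int_m: "integrable \<mu> (\<lambda>x. exp (- x\<^sup>2))"
    by (rule integrable_const_bound[where B=1]) (auto intro!: measurable_\<mu>)
  have "m \<noteq> 0"
  proof
    assume "m = 0"
    then have "AE x in \<mu>. exp (- x\<^sup>2) = 0"
      using integral_nonneg_eq_0_iff_AE[OF int_m] unfolding m_def by simp
    then show False by (simp add: AE_False)
  qed
  moreover have "m \<ge> 0" unfolding m_def by (intro integral_nonneg_AE) auto
  ultimately have m_pos: "m > 0" by simp
  have "m / sqrt (2 * pi) * exp (- y\<^sup>2) \<le> pY \<mu> y" for y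
  proof -
    have "(\<integral>x. exp (- y\<^sup>2) / sqrt (2 * pi) * exp (- x\<^sup>2) \<partial>\<mu>) \<le> pY \<mu> y"
      unfolding pY_def using phi_shift_lower
      by (intro integral_mono integrable_phi_shift integrable_mult_right int_m) auto
    then show ?thesis unfolding m_def by (simp add: mult.commute)
  qed
  then show ?thesis using m_pos by (intro exI[of _ "m / sqrt (2 * pi)"]) auto
qed

lemma ln_pY_bound: "\<exists>C\<ge>0. \<forall>y. \<bar>ln (pY \<mu> y)\<bar> \<le> C + y\<^sup>2"
proof -
  obtain c where c: "c > 0" "\<And>y. c * exp (- y\<^sup>2) \<le> pY \<mu> y" using pY_lower by blast
  have "\<bar>ln (pY \<mu> y)\<bar> \<le> \<bar>ln c\<bar> + y\<^sup>2" for y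
  proof -
    have pos: "0 < c * exp (- y\<^sup>2)" using c(1) by simp
    have "ln (pY \<mu> y) \<le> 0" using pY_le_one[of y] c(2)[of y] pos by simp
    moreover have "ln (c * exp (- y\<^sup>2)) \<le> ln (pY \<mu> y)"
      using c(2)[of y] pos by simp
    moreover have "ln (c * exp (- y\<^sup>2)) = ln c - y\<^sup>2"
      using c(1) by (simp add: ln_mult)
    ultimately show ?thesis by linarith
  qed
  then show ?thesis by (intro exI[of _ "\<bar>ln c\<bar>"]) auto
qed

end

definition d_coeff :: "real measure \<Rightarrow> real \<Rightarrow> complex" where
  "d_coeff \<mu> y = - of_real (ln (2 * pi) / 2) - of_real (ln (pY \<mu> y))"

lemma d_integrand_eq_gauss_term: "d_integrand \<mu> z y = gauss_term (d_coeff \<mu> y) y 0 z"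
  unfolding d_integrand_def gauss_term_def d_coeff_def by (simp add: algebra_simps)

lemma d_coeff_growth:
  assumes "prob_space \<mu>" and "sets \<mu> = sets borel"
  shows "\<exists>A\<ge>0. \<forall>y. norm (d_coeff \<mu> y) \<le> A + y\<^sup>2"
proof -
  obtain C where C: "C \<ge> 0" "\<And>y. \<bar>ln (pY \<mu> y)\<bar> \<le> C + y\<^sup>2"
    using ln_pY_bound[OF assms] by blast
  have triangle: "norm (d_coeff \<mu> y) \<le> norm (of_real (ln (2 * pi) / 2) :: complex) + norm (of_real (ln (pY \<mu> y)) :: complex)" for y
    unfolding d_coeff_def by (metis norm_minus_cancel norm_triangle_ineq4)
  have "norm (d_coeff \<mu> y) \<le> (\<bar>ln (2 * pi) / 2\<bar> + C) + y\<^sup>2" for y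
    using triangle[of y] C(2)[of y] unfolding norm_of_real by linarith
  then show ?thesis using C(1) by (intro exI[of _ "\<bar>ln (2 * pi) / 2\<bar> + C"]) auto
qed

theorem lemma2:
  fixes \<mu> :: "real measure"
  assumes "prob_space \<mu>"
    and "sets \<mu> = sets borel"
    and "integrable \<mu> (\<lambda>x. x ^ 2)"
  shows "(\<forall>z. integrable lborel (d_integrand \<mu> z))
       \<and> d \<mu> holomorphic_on UNIV
       \<and> continuous_on UNIV (\<lambda>x::real. d \<mu> (complex_of_real x))"
proof -
  note [measurable] = pY_measurable[OF assms(1,2)]
  have meas: "d_coeff \<mu> \<in> borel_measurable borel" unfolding d_coeff_def by measurable
  obtain A where A: "A \<ge> 0" "\<And>y. norm (d_coeff \<mu> y) \<le> A + y\<^sup>2"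
    using d_coeff_growth[OF assms(1,2)] by blast
  have d_eq: "d \<mu> = (\<lambda>z. \<integral>y. gauss_term (d_coeff \<mu> y) y 0 z \<partial>lborel)"
    unfolding d_def d_integrand_eq_gauss_term ..
  have integrable: "\<forall>z. integrable lborel (d_integrand \<mu> z)"
    using gauss_term_integrable[OF meas A] unfolding d_integrand_eq_gauss_term by blast
  have entire: "d \<mu> holomorphic_on UNIV"
    unfolding d_eq by (rule gauss_integral_entire[OF meas A])
  have "continuous_on UNIV (d \<mu> \<circ> complex_of_real)"
    using holomorphic_on_imp_continuous_on[OF entire]
    by (intro continuous_on_compose continuous_intros) (auto intro: continuous_on_subset)
  with integrable entire show ?thesis by (simp add: o_def)
qed

end
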